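(* Let $n,r\ge1$ be integers and $\mathbf G=\mathbf G(r,1,n)$ with the subgroup sequence, coset leaders and initial vector described in the context. Then the subgroup decoding algorithm decodes robustly: for all $g\in\mathbf G$, any received vector in the decoding region of $g$ decodes to $g$.
   Context: $\mathbf G(r,1,n)$ is the group of $n\times n$ complex monomial matrices whose nonzero entries are $r$-th roots of unity. Let $\xi=e^{2\pi i/r}$, let $a_i$ ($1\le i\le n$) be the diagonal matrix multiplying the $i$-th coordinate by $\xi$, and $b_j$ ($1\le j<n$) the permutation matrix swapping coordinates $j$ and $j+1$. Subgroups (block diagonal): $\mathbf G_0=\{I\}$, $\mathbf G_{2l-1}=\mathbf G(r,1,l)\oplus\{I_{n-l}\}$ ($1\le l\le n$), $\mathbf G_{2l}=\mathbf G(r,1,l)\oplus\mathbf G(r,1,1)\oplus\{I_{n-l-1}\}$ ($1\le l\le n-1$). Coset leaders: $\operatorname{CL}(\mathbf G_1/\mathbf G_0)=\{I,a_1,\dots,a_1^{r-1}\}$, $\operatorname{CL}(\mathbf G_{2l}/\mathbf G_{2l-1})=\{I,a_{l+1},\dots,a_{l+1}^{r-1}\}$, $\operatorname{CL}(\mathbf G_{2l+1}/\mathbf G_{2l})=\{I,b_l,b_{l-1}b_l,\dots,b_1b_2\cdots b_l\}$. Initial vector $\mathbf x_0=(u_1,\dots,u_n)$ with real $0<u_1<\cdots<u_n$, $\|\mathbf x_0\|=1$ (standard Hermitian inner product). $S=\operatorname{Stab}_{\mathbf G}(\mathbf x_0)$. Decoding region of $g$: $\operatorname{DR}(g)=\{\mathbf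 x:\|g\mathbf x-\mathbf x_0\|<\|a\mathbf x-\mathbf x_0\|\ \forall a\notin Sg\}$. Subgroup decoding algorithm: $\mathbf r_0=\mathbf r$; for $k=1,\dots,2n-1$ choose $d_k\in\operatorname{CL}(\mathbf G_k/\mathbf G_{k-1})$ minimizing $\|a\mathbf r_{k-1}-\mathbf x_0\|$ (ties broken by a fixed ordering), $\mathbf r_k=d_k\mathbf r_{k-1}$; output $d_{2n-1}\cdots d_1$, regarded as decoding to $g$ when it lies in $Sg$. *)

theory Defs
  imports "Jordan_Normal_Form.Matrix" "HOL-Combinatorics.Permutations"
begin

text \<open>Vectors of C^n are complex vec of dimension n (coordinates indexed 0..n-1,
  coordinate i+1 of the paper is index i); matrices are complex mat.\<close>

definition hnorm :: "complex vec \<Rightarrow> real" where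
  "hnorm v = sqrt (\<Sum>i<dim_vec v. (cmod (v $ i))\<^sup>2)"

definition xi :: "nat \<Rightarrow> complex" where
  "xi r = cis (2 * pi / real r)"

definition Grn :: "nat \<Rightarrow> nat \<Rightarrow> complex mat set" where
  "Grn r n = {A. A \<in> carrier_mat n n \<and>
     (\<exists>\<sigma> c. \<sigma> permutes {..<n} \<and> (\<forall>j<n. c j ^ r = 1) \<and>
        (\<forall>i<n. \<forall>j<n. A $$ (i,j) = (if i = \<sigma> j then c j else 0)))}"

definition amat :: "nat \<Rightarrow> nat \<Rightarrow> nat \<Rightarrow> complex mat" where
  "amat r n i = mat n n (\<lambda>(p,q). if p = q then (if p = i - 1 then xi r else 1) else 0)"

definition bmat :: "nat \<Rightarrow> nat \<Rightarrow> complex mat" where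
  "bmat n j = mat n n (\<lambda>(p,q).
      if q = (if p = j - 1 then j else if p = j then j - 1 else p) then 1 else 0)"

definition bprod :: "nat \<Rightarrow> nat \<Rightarrow> nat \<Rightarrow> complex mat" where
  "bprod n i l = foldr (\<lambda>j M. bmat n j * M) [i..<Suc l] (1\<^sub>m n)"

text \<open>Coset leaders CL(G_k / G_{k-1}) for k = 1 .. 2n-1.\<close>
definition CL :: "nat \<Rightarrow> nat \<Rightarrow> nat \<Rightarrow> complex mat set" where
  "CL r n k =
     (if k = 1 then {amat r n 1 ^\<^sub>m e | e. e < r}
      else if even k then {amat r n (k div 2 + 1) ^\<^sub>m e | e. e < r}
      else {1\<^sub>m n} \<union> {bprod n i (k div 2) | i. 1 \<le> i \<and> i \<le> k div 2})"

definition Stab :: "nat \<Rightarrow> nat \<Rightarrow> complex vec \<Rightarrow> complex mat set" where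
  "Stab r n x0 = {A \<in> Grn r n. A *\<^sub>v x0 = x0}"

definition DR :: "nat \<Rightarrow> nat \<Rightarrow> complex vec \<Rightarrow> complex mat \<Rightarrow> complex vec set" where
  "DR r n x0 g = {x \<in> carrier_vec n.
      \<forall>a \<in> Grn r n. a \<notin> {s * g | s. s \<in> Stab r n x0} \<longrightarrow>
         hnorm (g *\<^sub>v x - x0) < hnorm (a *\<^sub>v x - x0)}"

definition first_min :: "('a \<Rightarrow> real) \<Rightarrow> 'a list \<Rightarrow> 'a" where
  "first_min f xs = hd (filter (\<lambda>a. \<forall>b\<in>set xs. f a \<le> f b) xs)"

text \<open>Subgroup decoding: ord k is the fixed ordering of CL(G_k/G_{k-1}).
  dec_run returns (d_k ... d_1, r_k).\<close>
fun dec_run :: "nat \<Rightarrow> (nat \<Rightarrow> complex mat list) \<Rightarrow> complex vec \<Rightarrow> complex vec \<Rightarrow> nat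
                 \<Rightarrow> complex mat \<times> complex vec" where
  "dec_run n ord x0 rv 0 = (1\<^sub>m n, rv)"
| "dec_run n ord x0 rv (Suc k) =
     (let (p, v) = dec_run n ord x0 rv k;
          d = first_min (\<lambda>a. hnorm (a *\<^sub>v v - x0)) (ord (Suc k))
      in (d * p, d *\<^sub>v v))"

definition decode :: "nat \<Rightarrow> (nat \<Rightarrow> complex mat list) \<Rightarrow> complex vec \<Rightarrow> complex vec \<Rightarrow> complex mat" where
  "decode n ord x0 rv = fst (dec_run n ord x0 rv (2 * n - 1))"

end

theory Submission
  imports Defs
begin

text \<open>Each step of the decoder is locally optimal, and because x0 is real, positive and strictly
  increasing this pins down the shape of the intermediate vector: step 1 and the even steps rotate
  one new coordinate by the r-th root of unity maximising its real part, and the odd steps insert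
  the newest coordinate into the sorted prefix so that the real parts stay sorted. The final vector
  p x therefore has maximally rotated coordinates with increasing real parts. Every vector g x of
  the orbit has the same norm, and its correlation with x0 is at most that of p x: coordinatewise
  by maximality of the rotations, then by the rearrangement inequality. So p x is a closest point
  of the orbit to x0, and the definition of DR(g) forces p \<in> S g.\<close>

lemma xi_power: "xi r ^ k = cis (2 * pi * real k / real r)"
  unfolding xi_def by (simp add: DeMoivre mult.commute)

lemma xi_power_root_unity: "r > 0 \<Longrightarrow> (xi r ^ e) ^ r = 1"
  by (simp add: xi_power DeMoivre)

lemma root_unity_xi_power: "r > 0 \<Longrightarrow> c ^ r = 1 \<Longrightarrow> \<exists>e<r. c = xi r ^ e"
  using bij_betw_roots_unity[of r] unfolding bij_betw_def xi_power by auto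

lemma root_unity_norm: "r > 0 \<Longrightarrow> (c::complex) ^ r = 1 \<Longrightarrow> cmod c = 1"
  by (metis norm_one norm_power power_eq_1_iff norm_ge_zero neq0_conv)

definition monom_mat :: "nat \<Rightarrow> (nat \<Rightarrow> nat) \<Rightarrow> (nat \<Rightarrow> complex) \<Rightarrow> complex mat" where
  "monom_mat n \<sigma> c = mat n n (\<lambda>(i,j). if i = \<sigma> j then c j else 0)"

lemma Grn_iff_monom_mat:
  "A \<in> Grn r n \<longleftrightarrow> (\<exists>\<sigma> c. \<sigma> permutes {..<n} \<and> (\<forall>j<n. c j ^ r = 1) \<and> A = monom_mat n \<sigma> c)"
proof
  assume "A \<in> Grn r n"
  then obtain \<sigma> c where A: "A \<in> carrier_mat n n" "\<sigma> permutes {..<n}" "\<forall>j<n. c j ^ r = 1"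
     "\<forall>i<n. \<forall>j<n. A $$ (i,j) = (if i = \<sigma> j then c j else 0)"
    unfolding Grn_def by auto
  have "A = monom_mat n \<sigma> c" by (rule eq_matI) (use A in \<open>auto simp: monom_mat_def\<close>)
  with A show "\<exists>\<sigma> c. \<sigma> permutes {..<n} \<and> (\<forall>j<n. c j ^ r = 1) \<and> A = monom_mat n \<sigma> c" by blast
next
  assume "\<exists>\<sigma> c. \<sigma> permutes {..<n} \<and> (\<forall>j<n. c j ^ r = 1) \<and> A = monom_mat n \<sigma> c"
  then show "A \<in> Grn r n" unfolding Grn_def monom_mat_def by fastforce
qed

lemma monom_mat_in_Grn: "\<sigma> permutes {..<n} \<Longrightarrow> \<forall>j<n. c j ^ r = 1 \<Longrightarrow> monom_mat n \<sigma> c \<in> Grn r n"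
  unfolding Grn_iff_monom_mat by blast

lemma Grn_carrier_mat: "A \<in> Grn r n \<Longrightarrow> A \<in> carrier_mat n n"
  unfolding Grn_def by auto

lemma monom_mat_mult:
  assumes \<tau>: "\<tau> permutes {..<n}"
  shows "monom_mat n \<sigma> c * monom_mat n \<tau> d = monom_mat n (\<sigma> \<circ> \<tau>) (\<lambda>j. c (\<tau> j) * d j)"
proof (rule eq_matI)
  fix i j assume "i < dim_row (monom_mat n (\<sigma> \<circ> \<tau>) (\<lambda>j. c (\<tau> j) * d j))"
    and "j < dim_col (monom_mat n (\<sigma> \<circ> \<tau>) (\<lambda>j. c (\<tau> j) * d j))"
  then have i: "i < n" and j: "j < n" by (auto simp: monom_mat_def)
  have "\<tau> j < n" using permutes_in_image[OF \<tau>] j by simp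
  have "(monom_mat n \<sigma> c * monom_mat n \<tau> d) $$ (i,j)
      = (\<Sum>k<n. (if i = \<sigma> k then c k else 0) * (if k = \<tau> j then d j else 0))"
    using i j by (simp add: monom_mat_def scalar_prod_def atLeast0LessThan)
  also have "\<dots> = (\<Sum>k<n. if k = \<tau> j then (if i = \<sigma> k then c k else 0) * d j else 0)"
    by (rule sum.cong) auto
  also have "\<dots> = monom_mat n (\<sigma> \<circ> \<tau>) (\<lambda>j. c (\<tau> j) * d j) $$ (i,j)"
    using \<open>\<tau> j < n\<close> i j by (simp add: monom_mat_def)
  finally show "(monom_mat n \<sigma> c * monom_mat n \<tau> d) $$ (i,j)
      = monom_mat n (\<sigma> \<circ> \<tau>) (\<lambda>j. c (\<tau> j) * d j) $$ (i,j)" .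
qed (auto simp: monom_mat_def)

lemma Grn_mult: assumes "A \<in> Grn r n" "B \<in> Grn r n" shows "A * B \<in> Grn r n"
proof -
  obtain \<sigma> c where A: "\<sigma> permutes {..<n}" "\<forall>j<n. c j ^ r = 1" "A = monom_mat n \<sigma> c"
    using assms(1) Grn_iff_monom_mat by blast
  obtain \<tau> d where B: "\<tau> permutes {..<n}" "\<forall>j<n. d j ^ r = 1" "B = monom_mat n \<tau> d"
    using assms(2) Grn_iff_monom_mat by blast
  have "\<forall>j<n. (c (\<tau> j) * d j) ^ r = 1"
    using A(2) B(2) permutes_in_image[OF B(1)] by (simp add: power_mult_distrib)
  then show ?thesis
    using A B by (simp add: monom_mat_mult monom_mat_in_Grn permutes_compose)
qed

lemma one_mat_eq_monom_mat: "1\<^sub>m n = monom_mat n id (\<lambda>_. 1)"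
  by (rule eq_matI) (auto simp: monom_mat_def)

lemma one_mat_in_Grn: "1\<^sub>m n \<in> Grn r n"
  unfolding one_mat_eq_monom_mat by (rule monom_mat_in_Grn) (auto intro: permutes_id)

lemma monom_mat_mult_vec_index:
  assumes "v \<in> carrier_vec n" "p < n"
  shows "(monom_mat n \<sigma> c *\<^sub>v v) $ p = (\<Sum>j<n. (if p = \<sigma> j then c j else 0) * v $ j)"
  using assms by (simp add: monom_mat_def scalar_prod_def atLeast0LessThan)

lemma monom_mat_mult_vec_perm_index:
  assumes "\<sigma> permutes {..<n}" "x \<in> carrier_vec n" "j < n"
  shows "(monom_mat n \<sigma> c *\<^sub>v x) $ \<sigma> j = c j * x $ j"
proof -
  have "\<sigma> j < n" using permutes_in_image[OF assms(1)] assms(3) by simp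
  then have "(monom_mat n \<sigma> c *\<^sub>v x) $ \<sigma> j = (\<Sum>k<n. (if \<sigma> j = \<sigma> k then c k else 0) * x $ k)"
    by (rule monom_mat_mult_vec_index[OF assms(2)])
  also have "\<dots> = (\<Sum>k<n. if k = j then c j * x $ j else 0)"
    by (rule sum.cong) (use permutes_inj[OF assms(1)] in \<open>auto dest: injD\<close>)
  also have "\<dots> = c j * x $ j" using assms(3) by simp
  finally show ?thesis .
qed

subsection \<open>The generators and the coset leaders\<close>

lemma amat_power: "amat r n i ^\<^sub>m e = monom_mat n id (\<lambda>j. if j = i - 1 then xi r ^ e else 1)"
proof (induction e)
  case 0
  show ?case by (rule eq_matI) (auto simp: monom_mat_def amat_def)
next
  case (Suc e)
  have "amat r n i = monom_mat n id (\<lambda>j. if j = i - 1 then xi r else 1)"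
    by (rule eq_matI) (auto simp: amat_def monom_mat_def)
  with Suc.IH show ?case
    by (simp add: monom_mat_mult del: id_apply) (rule arg_cong[where f = "monom_mat n id"], auto)
qed

lemma amat_power_in_Grn: "r > 0 \<Longrightarrow> amat r n i ^\<^sub>m e \<in> Grn r n"
  unfolding amat_power by (rule monom_mat_in_Grn) (auto intro: permutes_id simp: xi_power_root_unity)

lemma amat_power_mult_vec:
  assumes "v \<in> carrier_vec n"
  shows "amat r n i ^\<^sub>m e *\<^sub>v v = vec n (\<lambda>p. if p = i - 1 then xi r ^ e * v $ p else v $ p)"
proof (rule eq_vecI)
  fix p assume "p < dim_vec (vec n (\<lambda>p. if p = i - 1 then xi r ^ e * v $ p else v $ p))"
  then have p: "p < n" by simp
  have "(amat r n i ^\<^sub>m e *\<^sub>v v) $ p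
      = (\<Sum>j<n. (if p = j then (if j = i - 1 then xi r ^ e else 1) else 0) * v $ j)"
    unfolding amat_power monom_mat_mult_vec_index[OF assms p] by simp
  also have "\<dots> = (\<Sum>j<n. if j = p then (if p = i - 1 then xi r ^ e else 1) * v $ p else 0)"
    by (rule sum.cong) auto
  finally show "(amat r n i ^\<^sub>m e *\<^sub>v v) $ p
      = vec n (\<lambda>p. if p = i - 1 then xi r ^ e * v $ p else v $ p) $ p"
    using p by simp
qed (simp add: amat_power monom_mat_def)

lemma bmat_eq_monom_mat:
  assumes "1 \<le> j" "j < n"
  shows "bmat n j = monom_mat n (Transposition.transpose (j - 1) j) (\<lambda>_. 1)"
  by (rule eq_matI) (use assms in \<open>auto simp: bmat_def monom_mat_def transpose_def\<close>)

lemma bmat_in_Grn: "1 \<le> j \<Longrightarrow> j < n \<Longrightarrow> bmat n j \<in> Grn r n"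
  unfolding bmat_eq_monom_mat by (rule monom_mat_in_Grn) (auto intro!: permutes_swap_id)

lemma bmat_mult_vec:
  assumes "v \<in> carrier_vec n" "1 \<le> j" "j < n"
  shows "bmat n j *\<^sub>v v = vec n (\<lambda>p. v $ Transposition.transpose (j - 1) j p)"
proof (rule eq_vecI)
  let ?t = "Transposition.transpose (j - 1) j"
  fix p assume "p < dim_vec (vec n (\<lambda>p. v $ ?t p))"
  then have p: "p < n" by simp
  have "?t p < n" using p assms by (auto simp: transpose_def)
  have "(bmat n j *\<^sub>v v) $ p = (\<Sum>q<n. (if p = ?t q then 1 else 0) * v $ q)"
    unfolding bmat_eq_monom_mat[OF assms(2,3)] using monom_mat_mult_vec_index[OF assms(1) p] by simp
  also have "\<dots> = (\<Sum>q<n. if q = ?t p then v $ ?t p else 0)"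
    by (rule sum.cong) (auto simp: transpose_def)
  finally show "(bmat n j *\<^sub>v v) $ p = vec n (\<lambda>p. v $ ?t p) $ p"
    using p \<open>?t p < n\<close> by simp
qed (simp add: bmat_def)

lemma bprod_in_Grn:
  assumes "1 \<le> i" "l < n"
  shows "bprod n i l \<in> Grn r n"
proof -
  have foldr_in_Grn: "foldr (\<lambda>j M. bmat n j * M) js (1\<^sub>m n) \<in> Grn r n"
    if "\<forall>j\<in>set js. 1 \<le> j \<and> j < n" for js
    using that by (induction js) (simp_all add: one_mat_in_Grn Grn_mult bmat_in_Grn)
  show ?thesis
    unfolding bprod_def by (rule foldr_in_Grn) (use assms in auto)
qed

lemma bprod_Suc_self: "bprod n (Suc l) l = 1\<^sub>m n"
  unfolding bprod_def by simp

text \<open>The coordinate permutation of b_i b_{i+1} ... b_l, with i counted from 1 as in the paper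
  and coordinates counted from 0: coordinate l moves to position i - 1 and the coordinates
  i - 1, ..., l - 1 move up by one.\<close>
definition insert_at :: "nat \<Rightarrow> nat \<Rightarrow> (nat \<Rightarrow> 'a) \<Rightarrow> nat \<Rightarrow> 'a" where
  "insert_at i l f p =
     (if p < i - 1 then f p else if p = i - 1 then f l else if p \<le> l then f (p - 1) else f p)"

lemma insert_at_range: "j < Suc l \<Longrightarrow> \<exists>j'<Suc l. insert_at q l f j = f j'"
  unfolding insert_at_def by (auto intro: exI[of _ j] exI[of _ l] exI[of _ "j - 1"])

lemma bprod_mult_vec:
  assumes v: "v \<in> carrier_vec n" and "1 \<le> i" "i \<le> Suc l" and l: "l < n"
  shows "bprod n i l *\<^sub>v v = vec n (insert_at i l (\<lambda>q. v $ q))"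
  using assms(2,3)
proof (induction "Suc l - i" arbitrary: i)
  case 0
  then have "i = Suc l" by simp
  then show ?case using v by (auto simp: bprod_Suc_self insert_at_def intro!: eq_vecI)
next
  case (Suc d)
  then have il: "i \<le> l" "Suc l - Suc i = d" by auto
  have "bprod n i l = bmat n i * bprod n (Suc i) l"
    unfolding bprod_def using il by (subst upt_conv_Cons) auto
  moreover have "bprod n (Suc i) l \<in> carrier_mat n n"
    using bprod_in_Grn[of "Suc i" l n] l Grn_carrier_mat by auto
  moreover have "bmat n i \<in> carrier_mat n n" by (simp add: bmat_def)
  ultimately have "bprod n i l *\<^sub>v v = bmat n i *\<^sub>v (bprod n (Suc i) l *\<^sub>v v)"
    using v by (simp add: assoc_mult_mat_vec)
  also have "\<dots> = bmat n i *\<^sub>v vec n (insert_at (Suc i) l (\<lambda>q. v $ q))"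
    using Suc il by simp
  also have "\<dots> = vec n (\<lambda>p. vec n (insert_at (Suc i) l (\<lambda>q. v $ q)) $ Transposition.transpose (i - 1) i p)"
    using Suc.prems il l by (simp add: bmat_mult_vec)
  also have "\<dots> = vec n (insert_at i l (\<lambda>q. v $ q))"
    using Suc.prems il l by (intro eq_vecI) (auto simp: insert_at_def transpose_def)
  finally show ?case .
qed

lemma CL_subset_Grn: "r > 0 \<Longrightarrow> k \<in> {1..2*n-1} \<Longrightarrow> CL r n k \<subseteq> Grn r n"
  unfolding CL_def by (auto split: if_splits intro: amat_power_in_Grn bprod_in_Grn one_mat_in_Grn)

lemma CL_nonempty: "r > 0 \<Longrightarrow> CL r n k \<noteq> {}"
  unfolding CL_def by auto

lemma first_min_minimal:
  assumes "xs \<noteq> []"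
  shows "first_min f xs \<in> set xs" "\<forall>b\<in>set xs. f (first_min f xs) \<le> f b"
proof -
  let ?ys = "filter (\<lambda>a. \<forall>b\<in>set xs. f a \<le> f b) xs"
  have fin: "finite (f ` set xs)" "f ` set xs \<noteq> {}" using assms by auto
  obtain a where a: "a \<in> set xs" "f a = Min (f ` set xs)" using Min_in[OF fin] by auto
  then have "\<forall>b\<in>set xs. f a \<le> f b" using fin by auto
  with a have "a \<in> set ?ys" by auto
  then have "?ys \<noteq> []" by (metis empty_iff empty_set)
  then have "hd ?ys \<in> set ?ys" by (rule hd_in_set)
  then show "first_min f xs \<in> set xs" "\<forall>b\<in>set xs. f (first_min f xs) \<le> f b"
    unfolding first_min_def by auto
qed

definition sq_dist :: "complex vec \<Rightarrow> nat \<Rightarrow> (nat \<Rightarrow> complex) \<Rightarrow> real" where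
  "sq_dist x0 n w = (\<Sum>i<n. (cmod (w i - x0 $ i))\<^sup>2)"

lemma sq_dist_vec: "sq_dist x0 n (\<lambda>i. vec n g $ i) = sq_dist x0 n g"
  unfolding sq_dist_def by (rule sum.cong) auto

lemma hnorm_eq_sqrt_sq_dist:
  "w \<in> carrier_vec n \<Longrightarrow> x0 \<in> carrier_vec n \<Longrightarrow> hnorm (w - x0) = sqrt (sq_dist x0 n (\<lambda>i. w $ i))"
  unfolding hnorm_def sq_dist_def by simp

lemma hnorm_le_iff_sq_dist_le:
  assumes "w \<in> carrier_vec n" "w' \<in> carrier_vec n" "x0 \<in> carrier_vec n"
  shows "hnorm (w - x0) \<le> hnorm (w' - x0) \<longleftrightarrow> sq_dist x0 n (\<lambda>i. w $ i) \<le> sq_dist x0 n (\<lambda>i. w' $ i)"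
  using assms by (simp add: hnorm_eq_sqrt_sq_dist)

lemma cmod_diff_real_square:
  "Im y = 0 \<Longrightarrow> (cmod (z - y))\<^sup>2 = (cmod z)\<^sup>2 - 2 * Re y * Re z + (Re y)\<^sup>2"
  unfolding cmod_power2 by (simp add: power2_eq_square algebra_simps)

lemma sum_eq_sum_plus_local_change:
  fixes f g :: "nat \<Rightarrow> real"
  assumes "finite A" "S \<subseteq> A" "\<forall>i\<in>A - S. f i = g i"
  shows "sum f A = sum g A + sum (\<lambda>i. f i - g i) S"
proof -
  have "sum (\<lambda>i. f i - g i) A = sum (\<lambda>i. f i - g i) S"
    using assms by (intro sum.mono_neutral_right) auto
  then show ?thesis by (simp add: sum_subtractf)
qed

lemma sq_dist_expand:
  assumes "\<forall>i<n. Im (x0 $ i) = 0"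
  shows "sq_dist x0 n w = (\<Sum>i<n. (cmod (w i))\<^sup>2) - 2 * (\<Sum>i<n. Re (x0 $ i) * Re (w i))
           + (\<Sum>i<n. (Re (x0 $ i))\<^sup>2)"
proof -
  have "sq_dist x0 n w = (\<Sum>i<n. (cmod (w i))\<^sup>2 - 2 * (Re (x0 $ i) * Re (w i)) + (Re (x0 $ i))\<^sup>2)"
    unfolding sq_dist_def by (rule sum.cong) (use assms in \<open>auto simp: cmod_diff_real_square\<close>)
  then show ?thesis by (simp add: sum.distrib sum_subtractf sum_distrib_left)
qed

lemma sq_dist_swap_le_imp_Re_le:
  assumes x0: "\<forall>i<n. Im (x0 $ i) = 0" "\<forall>i j. i < j \<and> j < n \<longrightarrow> Re (x0 $ i) < Re (x0 $ j)"
    and ab: "a < b" "b < n"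
    and w': "w' a = w b" "w' b = w a" "\<forall>i<n. i \<noteq> a \<and> i \<noteq> b \<longrightarrow> w' i = w i"
    and le: "sq_dist x0 n w \<le> sq_dist x0 n w'"
  shows "Re (w a) \<le> Re (w b)"
proof -
  have "sq_dist x0 n w' = sq_dist x0 n w
      + (\<Sum>i\<in>{a,b}. (cmod (w' i - x0 $ i))\<^sup>2 - (cmod (w i - x0 $ i))\<^sup>2)"
    unfolding sq_dist_def by (rule sum_eq_sum_plus_local_change) (use ab w' in auto)
  also have "(\<Sum>i\<in>{a,b}. (cmod (w' i - x0 $ i))\<^sup>2 - (cmod (w i - x0 $ i))\<^sup>2)
      = 2 * ((Re (x0 $ b) - Re (x0 $ a)) * (Re (w b) - Re (w a)))"
    using ab w' x0(1) by (simp add: cmod_diff_real_square algebra_simps)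
  finally have "0 \<le> (Re (x0 $ b) - Re (x0 $ a)) * (Re (w b) - Re (w a))" using le by linarith
  moreover have "Re (x0 $ b) - Re (x0 $ a) > 0" using x0(2) ab by auto
  ultimately show ?thesis by (simp add: zero_le_mult_iff)
qed

lemma sq_dist_single_le_imp_Re_le:
  assumes x0: "Im (x0 $ m) = 0" "Re (x0 $ m) > 0" and m: "m < n"
    and w': "\<forall>i<n. i \<noteq> m \<longrightarrow> w' i = w i" "cmod (w' m) = cmod (w m)"
    and le: "sq_dist x0 n w \<le> sq_dist x0 n w'"
  shows "Re (w' m) \<le> Re (w m)"
proof -
  have "sq_dist x0 n w' = sq_dist x0 n w
      + (\<Sum>i\<in>{m}. (cmod (w' i - x0 $ i))\<^sup>2 - (cmod (w i - x0 $ i))\<^sup>2)"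
    unfolding sq_dist_def by (rule sum_eq_sum_plus_local_change) (use m w' in auto)
  also have "(\<Sum>i\<in>{m}. (cmod (w' i - x0 $ i))\<^sup>2 - (cmod (w i - x0 $ i))\<^sup>2)
      = 2 * (Re (x0 $ m) * (Re (w m) - Re (w' m)))"
    using w' x0(1) by (simp add: cmod_diff_real_square algebra_simps)
  finally have "0 \<le> Re (x0 $ m) * (Re (w m) - Re (w' m))" using le by linarith
  then show ?thesis using x0(2) by (simp add: zero_le_mult_iff)
qed

lemma monom_mat_preserves_sum_cmod_square:
  assumes "\<sigma> permutes {..<n}" "x \<in> carrier_vec n" "r > 0" "\<forall>j<n. c j ^ r = 1"
  shows "(\<Sum>i<n. (cmod ((monom_mat n \<sigma> c *\<^sub>v x) $ i))\<^sup>2) = (\<Sum>j<n. (cmod (x $ j))\<^sup>2)"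
proof -
  have "(\<Sum>i<n. (cmod ((monom_mat n \<sigma> c *\<^sub>v x) $ i))\<^sup>2)
      = (\<Sum>j<n. (cmod ((monom_mat n \<sigma> c *\<^sub>v x) $ \<sigma> j))\<^sup>2)"
    using sum.reindex_bij_betw[OF permutes_imp_bij[OF assms(1)],
        of "\<lambda>i. (cmod ((monom_mat n \<sigma> c *\<^sub>v x) $ i))\<^sup>2"] by simp
  also have "\<dots> = (\<Sum>j<n. (cmod (x $ j))\<^sup>2)"
    by (rule sum.cong)
      (use assms root_unity_norm in \<open>auto simp: monom_mat_mult_vec_perm_index norm_mult\<close>)
  finally show ?thesis .
qed

subsection \<open>Rearrangement inequality\<close>

lemma rearrangement_inequality:
  fixes a b :: "nat \<Rightarrow> real"
  assumes "\<pi> permutes {..<n}"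
    and "\<forall>i j. i \<le> j \<and> j < n \<longrightarrow> a i \<le> a j" "\<forall>i j. i \<le> j \<and> j < n \<longrightarrow> b i \<le> b j"
  shows "(\<Sum>i<n. b (\<pi> i) * a i) \<le> (\<Sum>i<n. b i * a i)"
  using assms
proof (induction n arbitrary: \<pi>)
  case 0
  then show ?case by simp
next
  case (Suc n)
  note \<pi> = Suc.prems(1)
  define \<pi>' where "\<pi>' = Transposition.transpose n (\<pi> n) \<circ> \<pi>"
  have "\<pi>' permutes {..<n}"
    unfolding \<pi>'_def by (rule permutes_insert_lemma) (use \<pi> in \<open>simp add: lessThan_Suc\<close>)
  then have "(\<Sum>i<n. b (\<pi>' i) * a i) \<le> (\<Sum>i<n. b i * a i)"
    using Suc.IH Suc.prems by auto
  moreover have "\<pi>' n = n" by (simp add: \<pi>'_def)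
  ultimately have sorted_after_swap: "(\<Sum>i<Suc n. b (\<pi>' i) * a i) \<le> (\<Sum>i<Suc n. b i * a i)"
    by simp
  have "(\<Sum>i<Suc n. b (\<pi> i) * a i) \<le> (\<Sum>i<Suc n. b (\<pi>' i) * a i)"
  proof (cases "\<pi> n = n")
    case True
    then show ?thesis by (simp add: \<pi>'_def)
  next
    case False
    obtain j where j: "\<pi> j = n" using permutes_surj[OF \<pi>] by (metis surjD)
    have "j < Suc n" "j \<noteq> n" using permutes_in_image[OF \<pi>, of j] j False by auto
    have "\<pi> n < Suc n" using permutes_in_image[OF \<pi>, of n] by simp
    have "\<forall>i\<in>{..<Suc n} - {j, n}. b (\<pi>' i) * a i = b (\<pi> i) * a i"
      using j permutes_inj[OF \<pi>] by (auto simp: \<pi>'_def transpose_def dest: injD)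
    then have "(\<Sum>i<Suc n. b (\<pi>' i) * a i)
        = (\<Sum>i<Suc n. b (\<pi> i) * a i) + (\<Sum>i\<in>{j,n}. b (\<pi>' i) * a i - b (\<pi> i) * a i)"
      by (intro sum_eq_sum_plus_local_change) (use \<open>j < Suc n\<close> in auto)
    moreover have "(\<Sum>i\<in>{j,n}. b (\<pi>' i) * a i - b (\<pi> i) * a i) = (b n - b (\<pi> n)) * (a n - a j)"
      using \<open>j \<noteq> n\<close> j by (simp add: \<pi>'_def transpose_def algebra_simps)
    moreover have "(b n - b (\<pi> n)) * (a n - a j) \<ge> 0"
      using Suc.prems \<open>\<pi> n < Suc n\<close> \<open>j < Suc n\<close> by (intro mult_nonneg_nonneg) auto
    ultimately show ?thesis by linarith
  qed
  with sorted_after_swap show ?case by linarith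
qed

subsection \<open>The two kinds of decoding steps\<close>

definition max_rotated :: "nat \<Rightarrow> complex \<Rightarrow> bool" where
  "max_rotated r z \<longleftrightarrow> (\<forall>c::complex. c ^ r = 1 \<longrightarrow> Re (c * z) \<le> Re z)"

definition decoded_prefix :: "nat \<Rightarrow> nat \<Rightarrow> nat \<Rightarrow> complex vec \<Rightarrow> bool" where
  "decoded_prefix r m s v \<longleftrightarrow>
     (\<forall>j<m. max_rotated r (v $ j)) \<and> (\<forall>i j. i \<le> j \<and> j < s \<longrightarrow> Re (v $ i) \<le> Re (v $ j))"

lemma max_rotated_Re_ge:
  assumes "r > 0" "max_rotated r (d * z)" "c ^ r = 1" "d ^ r = 1"
  shows "Re (c * z) \<le> Re (d * z)"
proof -
  have "cnj d * d = 1"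
    using root_unity_norm[OF assms(1,4)] complex_norm_square[of d] by (simp add: mult.commute)
  then have eq: "(c * cnj d) * (d * z) = c * z"
    by (metis mult.assoc mult_1_left mult.left_commute)
  have "(c * cnj d) ^ r = 1"
    using assms(3,4) by (simp add: power_mult_distrib flip: complex_cnj_power)
  then have "Re ((c * cnj d) * (d * z)) \<le> Re (d * z)"
    using assms(2) unfolding max_rotated_def by blast
  then show ?thesis by (simp only: eq)
qed

lemma rotation_step:
  assumes r: "r > 0" and x0: "x0 \<in> carrier_vec n" "Im (x0 $ m) = 0" "Re (x0 $ m) > 0"
    and m: "m < n" and v: "v \<in> carrier_vec n"
    and d: "d \<in> {amat r n (Suc m) ^\<^sub>m e | e. e < r}"
    and opt: "\<forall>b \<in> {amat r n (Suc m) ^\<^sub>m e | e. e < r}. hnorm (d *\<^sub>v v - x0) \<le> hnorm (b *\<^sub>v v - x0)"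
  shows "max_rotated r ((d *\<^sub>v v) $ m)" "\<forall>p<n. p \<noteq> m \<longrightarrow> (d *\<^sub>v v) $ p = v $ p"
proof -
  obtain e where e: "e < r" "d = amat r n (Suc m) ^\<^sub>m e" using d by auto
  have dv: "d *\<^sub>v v = vec n (\<lambda>p. if p = m then xi r ^ e * v $ p else v $ p)"
    unfolding e using amat_power_mult_vec[OF v] by simp
  then show "\<forall>p<n. p \<noteq> m \<longrightarrow> (d *\<^sub>v v) $ p = v $ p" by simp
  show "max_rotated r ((d *\<^sub>v v) $ m)"
    unfolding max_rotated_def
  proof (intro allI impI)
    fix c :: complex assume "c ^ r = 1"
    then have "(c * xi r ^ e) ^ r = 1" using xi_power_root_unity[OF r] by (simp add: power_mult_distrib)
    then obtain e' where e': "e' < r" "c * xi r ^ e = xi r ^ e'" using root_unity_xi_power[OF r] by blast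
    let ?b = "amat r n (Suc m) ^\<^sub>m e'"
    have bv: "?b *\<^sub>v v = vec n (\<lambda>p. if p = m then xi r ^ e' * v $ p else v $ p)"
      using amat_power_mult_vec[OF v] by simp
    have "hnorm (d *\<^sub>v v - x0) \<le> hnorm (?b *\<^sub>v v - x0)" using opt e' by blast
    then have le: "sq_dist x0 n (\<lambda>p. if p = m then xi r ^ e * v $ p else v $ p)
             \<le> sq_dist x0 n (\<lambda>p. if p = m then xi r ^ e' * v $ p else v $ p)"
      using hnorm_le_iff_sq_dist_le[OF _ _ x0(1)] by (simp add: dv bv sq_dist_vec)
    have "cmod (xi r ^ e') = 1" "cmod (xi r ^ e) = 1"
      using root_unity_norm[OF r] xi_power_root_unity[OF r] by auto
    then have "Re (xi r ^ e' * v $ m) \<le> Re (xi r ^ e * v $ m)"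
      using sq_dist_single_le_imp_Re_le[OF x0(2,3) m _ _ le] by (simp add: norm_mult)
    then show "Re (c * (d *\<^sub>v v) $ m) \<le> Re ((d *\<^sub>v v) $ m)"
      using m e'(2) by (simp add: dv mult.assoc[symmetric])
  qed
qed

lemma decoded_prefix_rotation_step:
  assumes r: "r > 0" and x0: "x0 \<in> carrier_vec n" "Im (x0 $ m) = 0" "Re (x0 $ m) > 0"
    and m: "m < n" and v: "v \<in> carrier_vec n" and dec: "decoded_prefix r m s v" "s \<le> m"
    and d: "d \<in> {amat r n (Suc m) ^\<^sub>m e | e. e < r}"
    and opt: "\<forall>b \<in> {amat r n (Suc m) ^\<^sub>m e | e. e < r}. hnorm (d *\<^sub>v v - x0) \<le> hnorm (b *\<^sub>v v - x0)"
  shows "decoded_prefix r (Suc m) s (d *\<^sub>v v)"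
  using rotation_step[OF r x0 m v d opt] dec m by (auto simp: decoded_prefix_def less_Suc_eq)

lemma insert_at_sorted:
  fixes f :: "nat \<Rightarrow> complex"
  assumes q: "1 \<le> q" "q \<le> Suc l"
    and left: "2 \<le> q \<Longrightarrow> Re (f (q - 2)) \<le> Re (f l)"
    and right: "q \<le> l \<Longrightarrow> Re (f l) \<le> Re (f (q - 1))"
    and sorted: "\<And>i j. i \<le> j \<Longrightarrow> j < l \<Longrightarrow> Re (f i) \<le> Re (f j)"
    and ij: "i \<le> j" "j < Suc l"
  shows "Re (insert_at q l f i) \<le> Re (insert_at q l f j)"
proof -
  have before: "Re (f i) \<le> Re (f l)" if "i < q - 1"
    using sorted[of i "q - 2"] left that q by linarith
  have after: "Re (f l) \<le> Re (f (j - 1))" if "q - 1 < j"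
    using sorted[of "q - 1" "j - 1"] right that q ij by linarith
  consider "j < q - 1" | "i < q - 1" "j = q - 1" | "i = j" | "i < q - 1" "q - 1 < j"
    | "i = q - 1" "q - 1 < j" | "q - 1 < i"
    using ij by linarith
  then show ?thesis
    by cases (use before after sorted[of i j] sorted[of i "j - 1"] sorted[of "i - 1" "j - 1"] q ij
        in \<open>simp_all add: insert_at_def\<close>)
qed

text \<open>Moving the inserted coordinate one place left or right exchanges two adjacent entries,
  so optimality of q is an instance of the exchange inequality.\<close>
lemma optimal_insert_position:
  fixes f :: "nat \<Rightarrow> complex"
  assumes x0: "\<forall>i<n. Im (x0 $ i) = 0" "\<forall>i j. i < j \<and> j < n \<longrightarrow> Re (x0 $ i) < Re (x0 $ j)"
    and l: "l < n" and q: "1 \<le> q" "q \<le> Suc l"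
    and opt: "\<And>q'. 1 \<le> q' \<Longrightarrow> q' \<le> Suc l \<Longrightarrow>
                sq_dist x0 n (insert_at q l f) \<le> sq_dist x0 n (insert_at q' l f)"
  shows "2 \<le> q \<Longrightarrow> Re (f (q - 2)) \<le> Re (f l)" "q \<le> l \<Longrightarrow> Re (f l) \<le> Re (f (q - 1))"
proof -
  assume "2 \<le> q"
  then obtain t where t: "q = Suc (Suc t)" by (metis add_2_eq_Suc le_Suc_ex)
  have le: "sq_dist x0 n (insert_at q l f) \<le> sq_dist x0 n (insert_at (Suc t) l f)"
    using opt q t by simp
  have "Re (insert_at q l f t) \<le> Re (insert_at q l f (Suc t))"
    by (rule sq_dist_swap_le_imp_Re_le[OF x0 _ _ _ _ _ le]) (use q t l in \<open>auto simp: insert_at_def\<close>)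
  then show "Re (f (q - 2)) \<le> Re (f l)" using t by (simp add: insert_at_def)
next
  assume "q \<le> l"
  obtain t where t: "q = Suc t" using q(1) by (cases q) auto
  have le: "sq_dist x0 n (insert_at q l f) \<le> sq_dist x0 n (insert_at (Suc q) l f)"
    using opt q \<open>q \<le> l\<close> by simp
  have "Re (insert_at q l f t) \<le> Re (insert_at q l f (Suc t))"
    by (rule sq_dist_swap_le_imp_Re_le[OF x0 _ _ _ _ _ le]) (use q t \<open>q \<le> l\<close> l in \<open>auto simp: insert_at_def\<close>)
  then show "Re (f l) \<le> Re (f (q - 1))" using \<open>q \<le> l\<close> t by (simp add: insert_at_def)
qed

lemma insertion_step:
  assumes x0: "x0 \<in> carrier_vec n" "\<forall>i<n. Im (x0 $ i) = 0"
      "\<forall>i j. i < j \<and> j < n \<longrightarrow> Re (x0 $ i) < Re (x0 $ j)"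
    and l: "l < n" and v: "v \<in> carrier_vec n"
    and d: "d \<in> {1\<^sub>m n} \<union> {bprod n i l | i. 1 \<le> i \<and> i \<le> l}"
    and opt: "\<forall>b \<in> {1\<^sub>m n} \<union> {bprod n i l | i. 1 \<le> i \<and> i \<le> l}.
                hnorm (d *\<^sub>v v - x0) \<le> hnorm (b *\<^sub>v v - x0)"
    and dec: "decoded_prefix r (Suc l) l v"
  shows "decoded_prefix r (Suc l) (Suc l) (d *\<^sub>v v)"
proof -
  let ?f = "\<lambda>i. v $ i"
  have leaders: "{1\<^sub>m n} \<union> {bprod n i l | i. 1 \<le> i \<and> i \<le> l} = {bprod n q l | q. 1 \<le> q \<and> q \<le> Suc l}"
    using bprod_Suc_self[of n l] by (auto simp: le_Suc_eq) (rule exI[of _ "Suc l"], simp)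
  obtain q where q: "1 \<le> q" "q \<le> Suc l" "d = bprod n q l" using d leaders by auto
  have act: "bprod n q' l *\<^sub>v v = vec n (insert_at q' l ?f)" if "1 \<le> q'" "q' \<le> Suc l" for q'
    using bprod_mult_vec[OF v that l] .
  have "sq_dist x0 n (insert_at q l ?f) \<le> sq_dist x0 n (insert_at q' l ?f)"
    if q': "1 \<le> q'" "q' \<le> Suc l" for q'
  proof -
    have "hnorm (d *\<^sub>v v - x0) \<le> hnorm (bprod n q' l *\<^sub>v v - x0)" using opt leaders q' by blast
    then show ?thesis
      using hnorm_le_iff_sq_dist_le[OF _ _ x0(1)] by (simp add: q act[OF q(1,2)] act[OF q'] sq_dist_vec)
  qed
  note neighbours = optimal_insert_position[OF x0(2,3) l q(1,2) this]
  have dv: "d *\<^sub>v v = vec n (insert_at q l ?f)" using q act by simp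
  have "Re ((d *\<^sub>v v) $ i) \<le> Re ((d *\<^sub>v v) $ j)" if "i \<le> j" "j < Suc l" for i j
    using insert_at_sorted[OF q(1,2) neighbours _ that] dec that l dv by (simp add: decoded_prefix_def)
  moreover have "max_rotated r ((d *\<^sub>v v) $ j)" if "j < Suc l" for j
    using insert_at_range[OF that, of q ?f] dec l dv that by (auto simp: decoded_prefix_def)
  ultimately show ?thesis by (simp add: decoded_prefix_def)
qed

subsection \<open>The decoder output is a closest point of the orbit\<close>

lemma correlation_le_decoded:
  fixes u :: "nat \<Rightarrow> real"
  assumes r: "r > 0" and u: "\<forall>i<n. 0 \<le> u i" "\<forall>i j. i \<le> j \<and> j < n \<longrightarrow> u i \<le> u j"
    and x: "x \<in> carrier_vec n" and p: "p \<in> Grn r n" and g: "g \<in> Grn r n"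
    and dec: "decoded_prefix r n n (p *\<^sub>v x)"
  shows "(\<Sum>i<n. u i * Re ((g *\<^sub>v x) $ i)) \<le> (\<Sum>i<n. u i * Re ((p *\<^sub>v x) $ i))"
proof -
  obtain \<sigma> c where G: "\<sigma> permutes {..<n}" "\<forall>j<n. c j ^ r = 1" "g = monom_mat n \<sigma> c"
    using g Grn_iff_monom_mat by blast
  obtain \<tau> d where P: "\<tau> permutes {..<n}" "\<forall>j<n. d j ^ r = 1" "p = monom_mat n \<tau> d"
    using p Grn_iff_monom_mat by blast
  define v where "v = p *\<^sub>v x"
  have "(\<Sum>i<n. u i * Re ((g *\<^sub>v x) $ i)) = (\<Sum>j<n. u (\<sigma> j) * Re ((g *\<^sub>v x) $ \<sigma> j))"
    using sum.reindex_bij_betw[OF permutes_imp_bij[OF G(1)], of "\<lambda>i. u i * Re ((g *\<^sub>v x) $ i)"]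
    by simp
  also have "\<dots> \<le> (\<Sum>j<n. u (\<sigma> j) * Re (v $ \<tau> j))"
  proof (rule sum_mono)
    fix j assume "j \<in> {..<n}"
    then have j: "j < n" "\<tau> j < n" "\<sigma> j < n"
      using permutes_in_image[OF P(1)] permutes_in_image[OF G(1)] by auto
    have "max_rotated r (v $ \<tau> j)" using dec j by (simp add: decoded_prefix_def v_def)
    then have "max_rotated r (d j * x $ j)"
      using j by (simp add: v_def P(3) monom_mat_mult_vec_perm_index[OF P(1) x])
    then have "Re (c j * x $ j) \<le> Re (d j * x $ j)"
      by (rule max_rotated_Re_ge[OF r]) (use G(2) P(2) j in auto)
    then show "u (\<sigma> j) * Re ((g *\<^sub>v x) $ \<sigma> j) \<le> u (\<sigma> j) * Re (v $ \<tau> j)"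
      using u(1) j by (simp add: G(3) P(3) v_def monom_mat_mult_vec_perm_index[OF _ x]
                          G(1) P(1) mult_left_mono)
  qed
  also have "\<dots> = (\<Sum>i<n. u ((\<sigma> \<circ> Hilbert_Choice.inv \<tau>) i) * Re (v $ i))"
    using sum.reindex_bij_betw[OF permutes_imp_bij[OF P(1)], of "\<lambda>i. u ((\<sigma> \<circ> Hilbert_Choice.inv \<tau>) i) * Re (v $ i)"]
    by (simp add: permutes_inverses(2)[OF P(1)])
  also have "\<dots> \<le> (\<Sum>i<n. u i * Re (v $ i))"
    by (rule rearrangement_inequality[OF permutes_compose[OF permutes_inv[OF P(1)] G(1)]])
      (use u dec in \<open>auto simp: decoded_prefix_def v_def\<close>)
  finally show ?thesis unfolding v_def .
qed

lemma decoded_closest_in_orbit: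
  assumes r: "r > 0" and x0: "x0 \<in> carrier_vec n" "\<forall>i<n. Im (x0 $ i) = 0" "\<forall>i<n. 0 < Re (x0 $ i)"
      "\<forall>i j. i < j \<and> j < n \<longrightarrow> Re (x0 $ i) < Re (x0 $ j)"
    and x: "x \<in> carrier_vec n" and p: "p \<in> Grn r n" and g: "g \<in> Grn r n"
    and dec: "decoded_prefix r n n (p *\<^sub>v x)"
  shows "hnorm (p *\<^sub>v x - x0) \<le> hnorm (g *\<^sub>v x - x0)"
proof -
  have same_norm: "(\<Sum>i<n. (cmod ((A *\<^sub>v x) $ i))\<^sup>2) = (\<Sum>j<n. (cmod (x $ j))\<^sup>2)"
    if "A \<in> Grn r n" for A
    using that monom_mat_preserves_sum_cmod_square[OF _ x r] Grn_iff_monom_mat by metis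
  have "(\<Sum>i<n. Re (x0 $ i) * Re ((g *\<^sub>v x) $ i)) \<le> (\<Sum>i<n. Re (x0 $ i) * Re ((p *\<^sub>v x) $ i))"
    by (rule correlation_le_decoded[OF r _ _ x p g dec]) (use x0(3,4) in \<open>auto simp: le_less\<close>)
  then have "sq_dist x0 n (\<lambda>i. (p *\<^sub>v x) $ i) \<le> sq_dist x0 n (\<lambda>i. (g *\<^sub>v x) $ i)"
    unfolding sq_dist_expand[OF x0(2)] using same_norm[OF p] same_norm[OF g] by linarith
  then show ?thesis
    using hnorm_le_iff_sq_dist_le[OF _ _ x0(1)] Grn_carrier_mat[OF p] Grn_carrier_mat[OF g] x by simp
qed

lemma dec_run_choice_optimal:
  fixes v x0 :: "complex vec"
  assumes r: "r > 0" and k: "k \<in> {1..2*n-1}" and ord: "set (ord k) = CL r n k"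
  defines "d \<equiv> first_min (\<lambda>a. hnorm (a *\<^sub>v v - x0)) (ord k)"
  shows "d \<in> CL r n k" "\<forall>b \<in> CL r n k. hnorm (d *\<^sub>v v - x0) \<le> hnorm (b *\<^sub>v v - x0)"
proof -
  have "ord k \<noteq> []" using ord CL_nonempty[OF r] by (metis empty_set)
  then show "d \<in> CL r n k" "\<forall>b \<in> CL r n k. hnorm (d *\<^sub>v v - x0) \<le> hnorm (b *\<^sub>v v - x0)"
    using first_min_minimal[OF \<open>ord k \<noteq> []\<close>, of "\<lambda>a. hnorm (a *\<^sub>v v - x0)"] ord
    unfolding d_def by auto
qed

lemma dec_run_Suc_eq:
  "dec_run n ord x0 x (Suc k) =
     (let d = first_min (\<lambda>a. hnorm (a *\<^sub>v snd (dec_run n ord x0 x k) - x0)) (ord (Suc k))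
      in (d * fst (dec_run n ord x0 x k), d *\<^sub>v snd (dec_run n ord x0 x k)))"
  by (simp add: split_def Let_def)

lemma dec_run_in_Grn:
  assumes r: "r > 0" and ord: "\<forall>k \<in> {1..2*n-1}. set (ord k) = CL r n k"
    and x: "x \<in> carrier_vec n" and k: "k \<le> 2*n-1"
  shows "fst (dec_run n ord x0 x k) \<in> Grn r n \<and> fst (dec_run n ord x0 x k) *\<^sub>v x = snd (dec_run n ord x0 x k)"
  using k
proof (induction k)
  case 0
  then show ?case using x by (simp add: one_mat_in_Grn)
next
  case (Suc k)
  let ?p = "fst (dec_run n ord x0 x k)" and ?v = "snd (dec_run n ord x0 x k)"
  let ?d = "first_min (\<lambda>a. hnorm (a *\<^sub>v ?v - x0)) (ord (Suc k))"
  have k: "Suc k \<in> {1..2*n-1}" using Suc.prems by simp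
  have "?d \<in> CL r n (Suc k)"
    by (rule dec_run_choice_optimal(1)[where ord = ord, OF r k ord[rule_format, OF k], of ?v x0])
  then have d: "?d \<in> Grn r n" using CL_subset_Grn[OF r k] by blast
  have p: "?p \<in> Grn r n" "?p *\<^sub>v x = ?v" using Suc by auto
  have "(?d * ?p) *\<^sub>v x = ?d *\<^sub>v ?v"
    using assoc_mult_mat_vec[OF Grn_carrier_mat[OF d] Grn_carrier_mat[OF p(1)] x] p(2) by simp
  then show ?case
    using Grn_mult[OF d p(1)] by (simp del: dec_run.simps add: dec_run_Suc_eq Let_def)
qed

lemma dec_run_carrier_vec:
  assumes "r > 0" "\<forall>k \<in> {1..2*n-1}. set (ord k) = CL r n k" "x \<in> carrier_vec n" "k \<le> 2*n-1"
  shows "snd (dec_run n ord x0 x k) \<in> carrier_vec n"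
  using dec_run_in_Grn[OF assms] Grn_carrier_mat assms(3) by (metis mult_mat_vec_carrier)

lemma dec_run_decoded_prefix:
  assumes r: "r > 0" and x0: "x0 \<in> carrier_vec n" "\<forall>i<n. Im (x0 $ i) = 0" "\<forall>i<n. 0 < Re (x0 $ i)"
      "\<forall>i j. i < j \<and> j < n \<longrightarrow> Re (x0 $ i) < Re (x0 $ j)"
    and ord: "\<forall>k \<in> {1..2*n-1}. set (ord k) = CL r n k"
    and x: "x \<in> carrier_vec n" and k: "1 \<le> k" "k \<le> 2*n-1"
  shows "decoded_prefix r ((k+2) div 2) ((k+1) div 2) (snd (dec_run n ord x0 x k))"
  using k
proof (induction k rule: dec_induct)
  let ?d = "first_min (\<lambda>a. hnorm (a *\<^sub>v x - x0)) (ord 1)"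
  case base
  have "CL r n 1 = {amat r n (Suc 0) ^\<^sub>m e | e. e < r}" by (simp add: CL_def)
  then have "max_rotated r ((?d *\<^sub>v x) $ 0)"
    using rotation_step(1)[OF r x0(1), of 0 x ?d] dec_run_choice_optimal[OF r, of 1 n ord x x0]
      x0 x ord base by auto
  then show ?case by (simp add: Let_def decoded_prefix_def)
next
  case (step k)
  define v where "v = snd (dec_run n ord x0 x k)"
  define d where "d = first_min (\<lambda>a. hnorm (a *\<^sub>v v - x0)) (ord (Suc k))"
  have IH: "decoded_prefix r ((k+2) div 2) ((k+1) div 2) v" using step by (simp add: v_def)
  have v: "v \<in> carrier_vec n" using dec_run_carrier_vec[OF r ord x] step by (simp add: v_def)
  have k: "Suc k \<in> {1..2*n-1}" using step by simp
  note choice = dec_run_choice_optimal[where ord = ord, OF r k ord[rule_format, OF k], of v x0,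
      folded d_def]
  have "snd (dec_run n ord x0 x (Suc k)) = d *\<^sub>v v"
    by (simp del: dec_run.simps add: dec_run_Suc_eq Let_def v_def d_def)
  moreover have "decoded_prefix r ((Suc k + 2) div 2) ((Suc k + 1) div 2) (d *\<^sub>v v)"
  proof (cases "even k")
    case False
    then obtain l where l: "k = 2 * l + 1" by (metis oddE)
    have "CL r n (Suc k) = {amat r n (Suc (Suc l)) ^\<^sub>m e | e. e < r}" using l by (simp add: CL_def)
    then show ?thesis
      using decoded_prefix_rotation_step[OF r x0(1), of "Suc l" v "Suc l" d] choice x0 v IH l step
      by simp
  next
    case True
    then obtain l where l: "k = 2 * l" by blast
    have "CL r n (Suc k) = {1\<^sub>m n} \<union> {bprod n i l | i. 1 \<le> i \<and> i \<le> l}"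
      using l step by (simp add: CL_def)
    then show ?thesis
      using insertion_step[OF x0(1,2,4) _ v, of l d r] choice IH l step by simp
  qed
  ultimately show ?case by simp
qed

theorem mainTheorem16:
  fixes n r :: nat and x0 :: "complex vec" and ord :: "nat \<Rightarrow> complex mat list"
  assumes "n \<ge> 1" and "r \<ge> 1"
    and "x0 \<in> carrier_vec n"
    and "\<forall>i<n. Im (x0 $ i) = 0"
    and "\<forall>i<n. 0 < Re (x0 $ i)"
    and "\<forall>i j. i < j \<and> j < n \<longrightarrow> Re (x0 $ i) < Re (x0 $ j)"
    and "hnorm x0 = 1"
    and "\<forall>k \<in> {1..2*n-1}. distinct (ord k) \<and> set (ord k) = CL r n k"
  shows "\<forall>g \<in> Grn r n. \<forall>x \<in> DR r n x0 g.
           \<exists>s \<in> Stab r n x0. decode n ord x0 x = s * g"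
proof (intro ballI)
  fix g x assume g: "g \<in> Grn r n" and x_DR: "x \<in> DR r n x0 g"
  have r: "r > 0" and x: "x \<in> carrier_vec n" and ord: "\<forall>k \<in> {1..2*n-1}. set (ord k) = CL r n k"
    using assms(2,8) x_DR by (auto simp: DR_def)
  let ?p = "decode n ord x0 x"
  have p: "?p \<in> Grn r n" "?p *\<^sub>v x = snd (dec_run n ord x0 x (2*n-1))"
    using dec_run_in_Grn[OF r ord x] unfolding decode_def by auto
  moreover have "(2*n-1+2) div 2 = n" "(2*n-1+1) div 2 = n" using assms(1) by auto
  ultimately have "decoded_prefix r n n (?p *\<^sub>v x)"
    using dec_run_decoded_prefix[OF r assms(3-6) ord x, of "2*n-1"] assms(1) by simp
  then have "hnorm (?p *\<^sub>v x - x0) \<le> hnorm (g *\<^sub>v x - x0)"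
    using decoded_closest_in_orbit[OF r assms(3-6) x p(1) g] by simp
  then show "\<exists>s \<in> Stab r n x0. ?p = s * g"
    using x_DR p(1) unfolding DR_def by fastforce
qed

end
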